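(* Let $(X,d)$ be a complete metric space and let $G:X\times X\to X$ be a mapping such that (i) $G(x,x)=x$ for all $x\in X$, and (ii) for $x,y\in X$, $G(x,y)=x$ implies $y=x$. Let $T:X\to P_{cl}(X)$ be a multivalued operator with $SFix(T)\neq\emptyset$, let $x^*\in SFix(T)$, and let $T_G:X\to P(X)$, $T_G(x)=\{G(x,u):u\in T(x)\}$, be the admissible perturbation of $T$ corresponding to $G$. Suppose there exists $l\in(0,1)$ such that $$H(T(x),\{x^*\})\le l\,H(T_G(x),\{x^*\})\quad\text{for all }x\in X.$$ Then $$H(T(Y),\{x^*\})\le l\,H(T_G(Y),\{x^*\})\quad\text{for all }Y\in P_{cl}(X).$$
   Context: $P(X)$ denotes the family of nonempty subsets of $X$ and $P_{cl}(X)$ the family of nonempty closed subsets. $SFix(T)=\{x\in X:T(x)=\{x\}\}$ is the set of strict fixed points. For $A,B\in P(X)$: $D(a,B)=\inf\{d(a,b):b\in B\}$, $e(A,B)=\sup\{D(a,B):a\in A\}$, and the Pompeiu–Hausdorff functional is $H(A,B)=\max\{e(A,B),e(B,A)\}$ (possibly $+\infty$). For $Y\subseteq X$, $T(Y)=\bigcup_{y\in Y}T(y)$ and $T_G(Y)=\bigcup_{y\in Y}T_G(y)$. *)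

theory Defs
  imports "HOL-Analysis.Analysis"
begin

definition gapD :: "'a::metric_space \<Rightarrow> 'a set \<Rightarrow> ereal" where
  "gapD a B = (INF b\<in>B. ereal (dist a b))"

definition excess :: "'a::metric_space set \<Rightarrow> 'a set \<Rightarrow> ereal" where
  "excess A B = (SUP a\<in>A. gapD a B)"

definition pompeiuH :: "'a::metric_space set \<Rightarrow> 'a set \<Rightarrow> ereal" where
  "pompeiuH A B = max (excess A B) (excess B A)"

definition SFix :: "('a \<Rightarrow> 'a set) \<Rightarrow> 'a set" where
  "SFix T = {x. T x = {x}}"

definition admissible_pert :: "('a \<Rightarrow> 'a \<Rightarrow> 'a) \<Rightarrow> ('a \<Rightarrow> 'a set) \<Rightarrow> 'a \<Rightarrow> 'a set" where
  "admissible_pert G T x = {G x u | u. u \<in> T x}"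

end

theory Submission
  imports Defs
begin

text \<open>For nonempty \<open>A\<close>, \<open>H(A,{x*})\<close> is just \<open>sup {d(a,x*) : a \<in> A}\<close>, so
  \<open>H(\<Union>y\<in>Y. A y, {x*})\<close> is the supremum over \<open>y \<in> Y\<close> of \<open>H(A y, {x*})\<close>.
  The pointwise hypothesis therefore passes to suprema since \<open>l \<ge> 0\<close>.
  Only nonemptiness of the values of \<open>T\<close> and of \<open>Y\<close> is used.\<close>

lemma pompeiuH_singleton:
  fixes A :: "'a::metric_space set"
  assumes "A \<noteq> {}"
  shows "pompeiuH A {x} = (SUP a\<in>A. ereal (dist a x))"
proof -
  have excess_to: "excess A {x} = (SUP a\<in>A. ereal (dist a x))"
    unfolding excess_def gapD_def by simp
  obtain a0 where a0: "a0 \<in> A" using assms by blast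
  have "excess {x} A = (INF a\<in>A. ereal (dist x a))"
    unfolding excess_def gapD_def by simp
  also have "\<dots> \<le> ereal (dist x a0)" using a0 by (rule INF_lower)
  also have "\<dots> \<le> (SUP a\<in>A. ereal (dist a x))"
    using a0 by (metis SUP_upper dist_commute)
  finally show ?thesis unfolding pompeiuH_def excess_to by (simp add: max_def)
qed

lemma pompeiuH_UN_singleton:
  fixes A :: "'i \<Rightarrow> 'a::metric_space set"
  assumes "Y \<noteq> {}" and "\<And>y. y \<in> Y \<Longrightarrow> A y \<noteq> {}"
  shows "pompeiuH (\<Union>y\<in>Y. A y) {x} = (SUP y\<in>Y. pompeiuH (A y) {x})"
proof -
  have "(\<Union>y\<in>Y. A y) \<noteq> {}" using assms by blast
  then show ?thesis
    using assms(2) by (simp add: pompeiuH_singleton SUP_UNION)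
qed

lemma SUP_le_ereal_mult_SUP:
  fixes f g :: "'i \<Rightarrow> ereal"
  assumes "0 \<le> c" and "\<And>y. y \<in> Y \<Longrightarrow> f y \<le> c * g y"
  shows "(SUP y\<in>Y. f y) \<le> c * (SUP y\<in>Y. g y)"
proof (rule SUP_least)
  fix y assume y: "y \<in> Y"
  have "f y \<le> c * g y" using y by (rule assms(2))
  also have "\<dots> \<le> c * (SUP y\<in>Y. g y)"
    using y assms(1) by (intro ereal_mult_left_mono SUP_upper)
  finally show "f y \<le> c * (SUP y\<in>Y. g y)" .
qed

lemma admissible_pert_nonempty:
  assumes "T x \<noteq> {}"
  shows "admissible_pert G T x \<noteq> {}"
  using assms unfolding admissible_pert_def by blast

theorem mainTheorem1:
  fixes G :: "'a::complete_space \<Rightarrow> 'a \<Rightarrow> 'a"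
    and T :: "'a \<Rightarrow> 'a set"
    and xs :: 'a
    and l :: real
  assumes G_diag: "\<And>x. G x x = x"
    and G_inj: "\<And>x y. G x y = x \<Longrightarrow> y = x"
    and T_ne: "\<And>x. T x \<noteq> {}"
    and T_closed: "\<And>x. closed (T x)"
    and SFix_ne: "SFix T \<noteq> {}"
    and xs_fix: "xs \<in> SFix T"
    and l_pos: "0 < l" and l_lt1: "l < 1"
    and hyp: "\<And>x. pompeiuH (T x) {xs} \<le> ereal l * pompeiuH (admissible_pert G T x) {xs}"
  shows "\<forall>Y. Y \<noteq> {} \<and> closed Y \<longrightarrow>
           pompeiuH (\<Union>y\<in>Y. T y) {xs}
             \<le> ereal l * pompeiuH (\<Union>y\<in>Y. admissible_pert G T y) {xs}"
proof (intro allI impI)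
  fix Y :: "'a set" assume "Y \<noteq> {} \<and> closed Y"
  then have Y_ne: "Y \<noteq> {}" ..
  have "pompeiuH (\<Union>y\<in>Y. T y) {xs} = (SUP y\<in>Y. pompeiuH (T y) {xs})"
    using Y_ne T_ne by (rule pompeiuH_UN_singleton)
  also have "\<dots> \<le> ereal l * (SUP y\<in>Y. pompeiuH (admissible_pert G T y) {xs})"
    using l_pos hyp by (intro SUP_le_ereal_mult_SUP) simp_all
  also have "\<dots> = ereal l * pompeiuH (\<Union>y\<in>Y. admissible_pert G T y) {xs}"
    using Y_ne T_ne by (simp add: pompeiuH_UN_singleton admissible_pert_nonempty)
  finally show "pompeiuH (\<Union>y\<in>Y. T y) {xs}
      \<le> ereal l * pompeiuH (\<Union>y\<in>Y. admissible_pert G T y) {xs}" .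
qed

end
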